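(* If $q>2$, the collinearity graph $\Gamma$ of $\mathcal X$ has diameter $2$.
   Context: Let $q=2^n$ and let $Q_0\cong Q(4,q)$ be the parabolic quadric generalized quadrangle in $\mathrm{PG}(4,q)$. An elliptic ovoid of $Q_0$ is a set $X=S\cap Q_0$ where $S$ is a $3$-dimensional projective subspace meeting $Q_0$ in an elliptic quadric $Q^-(3,q)$. Two distinct elliptic ovoids meet in one point (then they are called tangent) or in a conic. $\Gamma$ is the graph whose vertices are the elliptic ovoids of $Q_0$, two being adjacent iff they are distinct and tangent. *)

theory Defs
  imports "HOL-Analysis.Analysis"
begin

text \<open>Underlying vector space V(5,q) = 'a^5 over a finite field 'a; PG(4,q) is its
  projective space.  A projective point is represented by the set of nonzero scalar
  multiples of a nonzero vector.\<close>

definition proj_pt :: "'a::field ^ 5 \<Rightarrow> ('a ^ 5) set" where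
  "proj_pt v = {c *s v | c. c \<noteq> 0}"

text \<open>Standard nondegenerate parabolic quadratic form of Q(4,q):
  X0 X1 + X2 X3 + X4^2.\<close>

definition Qform :: "'a::field ^ 5 \<Rightarrow> 'a" where
  "Qform x = x$0 * x$1 + x$2 * x$3 + x$4 * x$4"

definition Q0_points :: "('a::field ^ 5) set set" where
  "Q0_points = {proj_pt v | v. v \<noteq> 0 \<and> Qform v = 0}"

text \<open>A 3-dimensional projective subspace S of PG(4,q) is a 4-dimensional vector
  subspace W of 'a^5.  S meets Q_0 in an elliptic quadric Q^-(3,q) iff the restriction
  of the quadratic form to W is, in a suitable basis e0,..,e3 of W, of the canonical
  elliptic shape  y0 y1 + g(y2,y3)  with g an anisotropic binary quadratic form.\<close>

definition elliptic_section :: "('a::field ^ 5) set \<Rightarrow> bool" where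
  "elliptic_section W \<longleftrightarrow>
     vec.subspace W \<and> vec.dim W = 4 \<and>
     (\<exists>e :: nat \<Rightarrow> 'a ^ 5. \<exists>b c d :: 'a.
        inj_on e {0..3} \<and> vec.independent (e ` {0..3}) \<and> vec.span (e ` {0..3}) = W \<and>
        (\<forall>y0 y1 y2 y3.
           Qform (y0 *s e 0 + y1 *s e 1 + y2 *s e 2 + y3 *s e 3)
             = y0 * y1 + b * y2 * y2 + c * y2 * y3 + d * y3 * y3) \<and>
        (\<forall>y2 y3. b * y2 * y2 + c * y2 * y3 + d * y3 * y3 = 0 \<longrightarrow> y2 = 0 \<and> y3 = 0))"

definition section_points :: "('a::field ^ 5) set \<Rightarrow> ('a ^ 5) set set" where
  "section_points W = {proj_pt v | v. v \<in> W \<and> v \<noteq> 0 \<and> Qform v = 0}"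

definition elliptic_ovoid :: "('a::field ^ 5) set set \<Rightarrow> bool" where
  "elliptic_ovoid X \<longleftrightarrow> (\<exists>W. elliptic_section W \<and> X = section_points W)"

definition Gamma_adj :: "('a::field ^ 5) set set \<Rightarrow> ('a ^ 5) set set \<Rightarrow> bool" where
  "Gamma_adj X Y \<longleftrightarrow> elliptic_ovoid X \<and> elliptic_ovoid Y \<and> X \<noteq> Y \<and> card (X \<inter> Y) = 1"

definition is_walk :: "'v set \<Rightarrow> ('v \<Rightarrow> 'v \<Rightarrow> bool) \<Rightarrow> 'v list \<Rightarrow> bool" where
  "is_walk V E p \<longleftrightarrow> p \<noteq> [] \<and> set p \<subseteq> V \<and>
     (\<forall>i. Suc i < length p \<longrightarrow> E (p ! i) (p ! Suc i))"

definition graph_dist :: "'v set \<Rightarrow> ('v \<Rightarrow> 'v \<Rightarrow> bool) \<Rightarrow> 'v \<Rightarrow> 'v \<Rightarrow> enat" where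
  "graph_dist V E x y =
     (INF p \<in> {p. is_walk V E p \<and> hd p = x \<and> last p = y}. enat (length p - 1))"

definition graph_diameter :: "'v set \<Rightarrow> ('v \<Rightarrow> 'v \<Rightarrow> bool) \<Rightarrow> enat" where
  "graph_diameter V E = (SUP x \<in> V. SUP y \<in> V. graph_dist V E x y)"

end

theory Submission
  imports Defs "HOL-Number_Theory.Residues"
begin

text \<open>In characteristic 2 the nucleus \<open>(0,0,0,0,1)\<close> of Q(4,q) lies on no elliptic section,
  so every elliptic ovoid is cut out by a hyperplane \<open>x\<^sub>4 = a \<cdot> (x\<^sub>0, \<dots>, x\<^sub>3)\<close>, and this
  hyperplane meets the quadric elliptically iff the Arf invariant \<open>a\<^sub>0 a\<^sub>1 + a\<^sub>2 a\<^sub>3\<close> is not of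
  the form \<open>t\<^sup>2 + t\<close>. The values of \<open>t\<^sup>2 + t\<close> form a subgroup of index 2 of the additive group
  of GF(q), so the Arf invariants of two elliptic hyperplanes differ by such a value; this is
  exactly what is needed to solve for a hyperplane tangent to both, i.e. a common neighbour
  in \<open>\<Gamma>\<close>. For \<open>q > 2\<close> there are distinct ovoids sharing two points, so \<open>\<Gamma>\<close> is not complete.\<close>

section \<open>Characteristic two and the Artin-Schreier map\<close>

lemma card_eq_double_card_image:
  assumes "finite A" and fibre: "\<And>y. y \<in> f ` A \<Longrightarrow> card {x \<in> A. f x = y} = 2"
  shows "card A = 2 * card (f ` A)"
proof -
  have "A = (\<Union>y \<in> f ` A. {x \<in> A. f x = y})" by blast
  also have "card \<dots> = (\<Sum>y \<in> f ` A. card {x \<in> A. f x = y})"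
    using assms(1) by (intro card_UN_disjoint) auto
  also have "\<dots> = 2 * card (f ` A)" using fibre by simp
  finally show ?thesis .
qed

lemma two_eq_zero_if_card_power_of_two:
  assumes "CARD('a::field) = 2 ^ n"
  shows "(2::'a) = 0"
proof -
  have "finite (UNIV :: 'a set)" by (rule card_ge_0_finite) (simp add: assms)
  then have "prime CHAR('a)" by (intro prime_CHAR_semidom finite_imp_CHAR_pos)
  moreover have "CHAR('a) dvd 2 ^ n" using CHAR_dvd_CARD[where 'a='a] assms by simp
  ultimately have "CHAR('a) dvd 2" by (rule prime_dvd_power)
  then have "CHAR('a) = 2" using \<open>prime CHAR('a)\<close> by (intro primes_dvd_imp_eq) simp_all
  then show ?thesis using of_nat_CHAR[where 'a='a] by simp
qed

lemma char2_add_self: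
  assumes "(2::'a::field) = 0" shows "x + x = (0::'a)"
proof -
  have "x + x = 2 * x" by (rule mult_2[symmetric])
  then show ?thesis using assms by simp
qed

lemma char2_minus:
  assumes "(2::'a::field) = 0" shows "- x = (x::'a)"
proof -
  have "x = - x" using char2_add_self[OF assms, of x] by (simp add: add_eq_0_iff)
  then show ?thesis by simp
qed

lemma char2_add_eq_0_iff:
  assumes "(2::'a::field) = 0" shows "x + y = 0 \<longleftrightarrow> y = (x::'a)"
  using char2_minus[OF assms, of x] add_eq_0_iff[of x y] by argo

lemma char2_square_surj:
  assumes char2: "(2::'a::field) = 0" and "finite (UNIV :: 'a set)"
  shows "\<exists>s::'a. s * s = x"
proof -
  have "inj (\<lambda>s::'a. s * s)"
  proof (rule injI)
    fix s t :: 'a assume "s * s = t * t"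
    moreover have "(s + t) * (s + t) = s * s + t * t + 2 * (s * t)"
      by (simp add: algebra_simps mult_2)
    ultimately have "(s + t) * (s + t) = 0"
      using char2 char2_add_self[OF char2] by simp
    then show "s = t" using char2_add_eq_0_iff[OF char2] by simp
  qed
  then have "surj (\<lambda>s::'a. s * s)" using assms(2) finite_UNIV_inj_surj by blast
  from surjD[OF this, of x] show ?thesis by auto
qed

definition artin_schreier_range :: "'a::field set" where
  "artin_schreier_range = range (\<lambda>t. t * t + t)"

lemma artin_schreier_rangeI: "t * t + t \<in> artin_schreier_range"
  unfolding artin_schreier_range_def by blast

lemma zero_in_artin_schreier_range: "0 \<in> artin_schreier_range"
  using artin_schreier_rangeI[of 0] by simp

lemma artin_schreier_range_add:
  assumes char2: "(2::'a::field) = 0"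
    and "x \<in> artin_schreier_range" "(y::'a) \<in> artin_schreier_range"
  shows "x + y \<in> artin_schreier_range"
proof -
  obtain s t where "x = s * s + s" "y = t * t + t"
    using assms(2,3) unfolding artin_schreier_range_def by blast
  moreover have "(s + t) * (s + t) + (s + t) = (s * s + s) + (t * t + t) + 2 * (s * t)"
    by (simp add: algebra_simps mult_2)
  ultimately have "x + y = (s + t) * (s + t) + (s + t)" using char2 by simp
  then show ?thesis using artin_schreier_rangeI by metis
qed

lemma artin_schreier_fibre:
  assumes char2: "(2::'a::field) = 0"
  shows "{s. s * s + s = t * t + t} = {t, t + (1::'a)}"
proof -
  have "s * s + s - (t * t + t) = (s + t) * (s + t + 1) - 2 * (t * (s + t + 1))" for s
    by (simp add: algebra_simps mult_2)
  then have "s * s + s - (t * t + t) = (s + t) * (s + t + 1)" for s using char2 by simp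
  then have "s * s + s = t * t + t \<longleftrightarrow> s + t = 0 \<or> s + t + 1 = 0" for s
    by (metis eq_iff_diff_eq_0 mult_eq_0_iff)
  moreover have "s + t + 1 = 0 \<longleftrightarrow> s = t + 1" for s
    using char2_add_eq_0_iff[OF char2, of "t + 1" s] by (simp add: algebra_simps)
  moreover have "s + t = 0 \<longleftrightarrow> s = t" for s
    using char2_add_eq_0_iff[OF char2, of t s] by (simp add: add.commute)
  ultimately show ?thesis by auto
qed

lemma card_artin_schreier_range:
  assumes char2: "(2::'a::field) = 0" and fin: "finite (UNIV :: 'a set)"
  shows "CARD('a) = 2 * card (artin_schreier_range :: 'a set)"
  unfolding artin_schreier_range_def
proof (rule card_eq_double_card_image[OF fin])
  fix y assume "y \<in> range (\<lambda>t::'a. t * t + t)"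
  then obtain t where "y = t * t + t" by blast
  moreover have "t \<noteq> t + 1" by simp
  ultimately show "card {s \<in> UNIV. s * s + s = y} = 2"
    using artin_schreier_fibre[OF char2, of t] by simp
qed

lemma artin_schreier_range_add_notin:
  assumes char2: "(2::'a::field) = 0" and fin: "finite (UNIV :: 'a set)"
    and a: "(a::'a) \<notin> artin_schreier_range" and b: "b \<notin> artin_schreier_range"
  shows "a + b \<in> artin_schreier_range"
proof -
  let ?H = "artin_schreier_range :: 'a set"
  have "a + h \<notin> ?H" if "h \<in> ?H" for h
  proof
    assume "a + h \<in> ?H"
    then have "(a + h) + h \<in> ?H" using that by (rule artin_schreier_range_add[OF char2])
    then show False using a char2_add_self[OF char2, of h] by (simp add: add.assoc)
  qed
  then have "?H \<inter> (+) a ` ?H = {}" by blast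
  moreover have "card ((+) a ` ?H) = card ?H" by (simp add: card_image)
  moreover have "finite ?H" using fin by (rule finite_subset[rotated]) simp
  ultimately have "card (?H \<union> (+) a ` ?H) = CARD('a)"
    using card_artin_schreier_range[OF char2 fin] fin by (simp add: card_Un_disjoint mult_2)
  then have "?H \<union> (+) a ` ?H = UNIV" using fin by (simp add: card_subset_eq)
  then obtain h where "h \<in> ?H" "b = a + h" using b by blast
  then show ?thesis using char2 by (simp flip: add.assoc)
qed

lemma artin_schreier_range_ne_UNIV:
  assumes "(2::'a::field) = 0" and "finite (UNIV :: 'a set)"
  shows "\<exists>a::'a. a \<notin> artin_schreier_range"
proof (rule ccontr)
  assume "\<nexists>a::'a. a \<notin> artin_schreier_range"
  then have "artin_schreier_range = (UNIV :: 'a set)" by blast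
  then show False using card_artin_schreier_range[OF assms] assms(2) by simp
qed

lemma artin_schreier_root_ne_0:
  assumes char2: "(2::'a::field) = 0" and "k \<in> artin_schreier_range"
  obtains \<mu> where "\<mu> \<noteq> 0" "\<mu> * \<mu> + \<mu> = (k::'a)"
proof -
  obtain t where t: "k = t * t + t" using assms(2) unfolding artin_schreier_range_def by blast
  show ?thesis
  proof (cases "t = 0")
    case True
    then show ?thesis using that[of 1] t char2 by simp
  next
    case False
    then show ?thesis using that[of t] t by simp
  qed
qed

lemma exhaust_5:
  fixes x :: 5
  shows "x = 0 \<or> x = 1 \<or> x = 2 \<or> x = 3 \<or> x = 4"
proof (induct x)
  case (of_int z)
  then have "z = 0 \<or> z = 1 \<or> z = 2 \<or> z = 3 \<or> z = 4" by fastforce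
  then show ?case by auto
qed

lemma vec5_eq_iff:
  "(x::'a^5) = y \<longleftrightarrow> x$0 = y$0 \<and> x$1 = y$1 \<and> x$2 = y$2 \<and> x$3 = y$3 \<and> x$4 = y$4"
proof
  assume "x$0 = y$0 \<and> x$1 = y$1 \<and> x$2 = y$2 \<and> x$3 = y$3 \<and> x$4 = y$4"
  then have "x$i = y$i" for i using exhaust_5[of i] by auto
  then show "x = y" by (simp add: vec_eq_iff)
qed simp

definition vec5 :: "'a \<Rightarrow> 'a \<Rightarrow> 'a \<Rightarrow> 'a \<Rightarrow> 'a \<Rightarrow> 'a::zero^5" where
  "vec5 x0 x1 x2 x3 x4 =
     (\<chi> i. if i = 0 then x0 else if i = 1 then x1 else if i = 2 then x2
             else if i = 3 then x3 else x4)"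

lemma vec5_nth [simp]:
  "vec5 x0 x1 x2 x3 x4 $ 0 = x0" "vec5 x0 x1 x2 x3 x4 $ 1 = x1" "vec5 x0 x1 x2 x3 x4 $ 2 = x2"
  "vec5 x0 x1 x2 x3 x4 $ 3 = x3" "vec5 x0 x1 x2 x3 x4 $ 4 = x4"
  by (simp_all add: vec5_def)

lemma vec5_smult [simp]:
  "k *s vec5 x0 x1 x2 x3 x4 = vec5 (k * x0) (k * x1) (k * x2) (k * x3) (k * x4)"
  by (simp add: vec5_eq_iff)

lemma vec5_add [simp]:
  "vec5 x0 x1 x2 x3 x4 + vec5 z0 z1 z2 z3 z4 =
     vec5 (x0 + z0) (x1 + z1) (x2 + z2) (x3 + z3) (x4 + z4)"
  by (simp add: vec5_eq_iff)

lemma Qform_vec5 [simp]: "Qform (vec5 x0 x1 x2 x3 x4) = x0 * x1 + x2 * x3 + x4 * x4"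
  by (simp add: Qform_def)

lemma Qform_smult: "Qform (k *s v) = k * k * Qform (v::'a::field^5)"
  by (simp add: Qform_def algebra_simps)

text \<open>In characteristic 2 the polar form of \<open>Qform\<close> does not involve the last coordinate: its
  radical is spanned by the nucleus \<open>(0,0,0,0,1)\<close> of the parabolic quadric.\<close>

definition polar :: "'a::field^5 \<Rightarrow> 'a^5 \<Rightarrow> 'a" where
  "polar x y = x$0 * y$1 + x$1 * y$0 + x$2 * y$3 + x$3 * y$2"

lemma polar_vec5 [simp]:
  "polar (vec5 x0 x1 x2 x3 x4) (vec5 z0 z1 z2 z3 z4) = x0 * z1 + x1 * z0 + x2 * z3 + x3 * z2"
  by (simp add: polar_def)

lemma Qform_add:
  assumes char2: "(2::'a::field) = 0"
  shows "Qform (u + v) = Qform u + Qform v + polar u (v::'a^5)"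
proof -
  have "Qform (u + v) = Qform u + Qform v + polar u v + 2 * (u$4 * v$4)"
    by (simp add: Qform_def polar_def algebra_simps)
  then show ?thesis using char2 by simp
qed

lemma polar_commute: "polar x y = polar y x"
  by (simp add: polar_def algebra_simps)

lemma polar_add_left: "polar (x + y) z = polar x z + polar y z"
  by (simp add: polar_def algebra_simps)

lemma polar_add_right: "polar x (y + z) = polar x y + polar x z"
  by (simp add: polar_def algebra_simps)

lemma polar_smult_left: "polar (k *s x) y = k * polar x y"
  by (simp add: polar_def algebra_simps)

lemma polar_smult_right: "polar x (k *s y) = k * polar x y"
  by (simp add: polar_def algebra_simps)

lemma polar_zero_left [simp]: "polar 0 y = 0"
  by (simp add: polar_def)

lemma polar_self: "(2::'a::field) = 0 \<Longrightarrow> polar x x = (0::'a)"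
  by (simp add: polar_def algebra_simps flip: mult_2)

lemma Qform_lincomb:
  assumes char2: "(2::'a::field) = 0"
  shows "Qform (l *s u + m *s v) = l * l * Qform u + m * m * Qform v + l * m * polar u (v::'a^5)"
  by (simp add: Qform_add[OF char2] Qform_smult polar_smult_left polar_smult_right)

lemma proj_pt_in_section_points: "v \<in> W \<Longrightarrow> v \<noteq> 0 \<Longrightarrow> Qform v = 0 \<Longrightarrow> proj_pt v \<in> section_points W"
  unfolding section_points_def by blast

lemma proj_pt_self: "v \<in> proj_pt v"
  unfolding proj_pt_def by (rule CollectI, rule exI[of _ 1]) simp

lemma proj_pt_eqD: "proj_pt v = proj_pt w \<Longrightarrow> \<exists>k. k \<noteq> 0 \<and> v = k *s w"
  using proj_pt_self[of v] unfolding proj_pt_def by auto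

lemma proj_pt_smult:
  assumes "k \<noteq> 0" shows "proj_pt (k *s w) = proj_pt w"
proof -
  have "{c *s (k *s w) |c. c \<noteq> 0} = {c *s w |c. c \<noteq> 0}"
  proof (intro equalityI subsetI)
    fix x assume "x \<in> {c *s (k *s w) |c. c \<noteq> 0}"
    then obtain c where "c \<noteq> 0" "x = (c * k) *s w" by (auto simp: vector_smult_assoc)
    moreover have "c * k \<noteq> 0" using \<open>c \<noteq> 0\<close> assms by simp
    ultimately show "x \<in> {c *s w |c. c \<noteq> 0}" by blast
  next
    fix x assume "x \<in> {c *s w |c. c \<noteq> 0}"
    then obtain c where "c \<noteq> 0" "x = (c / k) *s (k *s w)" using assms
      by (auto simp: vector_smult_assoc)
    moreover have "c / k \<noteq> 0" using \<open>c \<noteq> 0\<close> assms by simp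
    ultimately show "x \<in> {c *s (k *s w) |c. c \<noteq> 0}" by blast
  qed
  then show ?thesis unfolding proj_pt_def .
qed

abbreviation lincomb4 :: "(nat \<Rightarrow> 'a::field^5) \<Rightarrow> 'a \<Rightarrow> 'a \<Rightarrow> 'a \<Rightarrow> 'a \<Rightarrow> 'a^5" where
  "lincomb4 e y0 y1 y2 y3 \<equiv> y0 *s e 0 + y1 *s e 1 + y2 *s e 2 + y3 *s e 3"

lemma lincomb4_add:
  "lincomb4 e y0 y1 y2 y3 + lincomb4 e z0 z1 z2 z3 =
     lincomb4 e (y0 + z0) (y1 + z1) (y2 + z2) (y3 + z3)"
  by (simp add: vec_eq_iff algebra_simps)

lemma lincomb4_smult:
  "k *s lincomb4 e y0 y1 y2 y3 = lincomb4 e (k * y0) (k * y1) (k * y2) (k * y3)"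
  by (simp add: vec_eq_iff algebra_simps)

lemma lincomb4_in_span: "lincomb4 e y0 y1 y2 y3 \<in> vec.span (e ` {0..3})"
proof -
  have "e i \<in> vec.span (e ` {0..3})" if "i \<le> 3" for i
    by (rule vec.span_base) (use that in auto)
  then show ?thesis by (intro vec.span_add vec.span_scale) auto
qed

lemma in_span_lincomb4:
  assumes "inj_on e {0..3}" and "x \<in> vec.span (e ` {0..3})"
  obtains y where "x = lincomb4 e (y (0::nat)) (y 1) (y 2) (y 3)"
proof -
  have indices: "{0..3::nat} = {0, 1, 2, 3}" by auto
  obtain u where "x = (\<Sum>v \<in> e ` {0..3}. u v *s v)"
    using assms(2) vec.span_finite[of "e ` {0..3}"] by auto
  also have "\<dots> = (\<Sum>i \<in> {0..3}. u (e i) *s e i)"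
    using sum.reindex[OF assms(1), of "\<lambda>v. u v *s v"] by simp
  also have "\<dots> = lincomb4 e (u (e 0)) (u (e 1)) (u (e 2)) (u (e 3))"
    unfolding indices by (simp add: add.assoc)
  finally show ?thesis by (rule that[of "\<lambda>i. u (e i)"])
qed

definition quadric_frame :: "(nat \<Rightarrow> 'a::field^5) \<Rightarrow> 'a \<Rightarrow> 'a \<Rightarrow> 'a \<Rightarrow> bool" where
  "quadric_frame e b c d \<longleftrightarrow>
     (\<forall>y0 y1 y2 y3.
        Qform (lincomb4 e y0 y1 y2 y3) = y0 * y1 + b * y2 * y2 + c * y2 * y3 + d * y3 * y3)"

definition anisotropic :: "'a::field \<Rightarrow> 'a \<Rightarrow> 'a \<Rightarrow> bool" where
  "anisotropic b c d \<longleftrightarrow> (\<forall>y2 y3. b * y2 * y2 + c * y2 * y3 + d * y3 * y3 = 0 \<longrightarrow> y2 = 0 \<and> y3 = 0)"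

lemma elliptic_section_iff_frame:
  "elliptic_section W \<longleftrightarrow> vec.subspace W \<and> vec.dim W = 4 \<and>
     (\<exists>e b c d. inj_on e {0..3} \<and> vec.independent (e ` {0..3}) \<and> vec.span (e ` {0..3}) = W \<and>
        quadric_frame e b c d \<and> anisotropic b c d)"
  unfolding elliptic_section_def quadric_frame_def anisotropic_def ..

lemma elliptic_section_frameE:
  assumes "elliptic_section W"
  obtains e b c d where "inj_on e {0..3}" "vec.independent (e ` {0..3})" "vec.span (e ` {0..3}) = W"
    "quadric_frame e b c d" "anisotropic b c d"
  using assms unfolding elliptic_section_iff_frame by blast

lemma quadric_frame_Qform:
  "quadric_frame e b c d \<Longrightarrow>
     Qform (lincomb4 e y0 y1 y2 y3) = y0 * y1 + b * y2 * y2 + c * y2 * y3 + d * y3 * y3"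
  unfolding quadric_frame_def by blast

lemma lincomb4_unit:
  "e 0 = lincomb4 e 1 0 0 0" "e 1 = lincomb4 e 0 1 0 0"
  "e 2 = lincomb4 e 0 0 1 0" "e 3 = lincomb4 e 0 0 0 1"
  by simp_all

lemma polar_lincomb4:
  assumes char2: "(2::'a::field) = 0" and F: "quadric_frame (e :: nat \<Rightarrow> 'a^5) b c d"
  shows "polar (lincomb4 e y0 y1 y2 y3) (lincomb4 e z0 z1 z2 z3) =
           y0 * z1 + y1 * z0 + c * (y2 * z3 + y3 * z2)"
proof -
  let ?y = "lincomb4 e y0 y1 y2 y3" and ?z = "lincomb4 e z0 z1 z2 z3"
  have "Qform (?y + ?z) = Qform ?y + Qform ?z + polar ?y ?z" by (rule Qform_add[OF char2])
  then have "polar ?y ?z = Qform (?y + ?z) - Qform ?y - Qform ?z" by simp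
  also have "\<dots> = y0 * z1 + y1 * z0 + c * (y2 * z3 + y3 * z2)
      + 2 * (b * y2 * z2 + d * y3 * z3)"
    unfolding lincomb4_add quadric_frame_Qform[OF F] by (simp add: algebra_simps mult_2)
  finally show ?thesis using char2 by simp
qed

lemma polar_lincomb4_unit:
  assumes "(2::'a::field) = 0" and "quadric_frame (e :: nat \<Rightarrow> 'a^5) b c d"
  shows "polar (lincomb4 e y0 y1 y2 y3) (e 0) = y1" "polar (lincomb4 e y0 y1 y2 y3) (e 1) = y0"
    "polar (lincomb4 e y0 y1 y2 y3) (e 2) = c * y3" "polar (lincomb4 e y0 y1 y2 y3) (e 3) = c * y2"
  by (subst lincomb4_unit, subst polar_lincomb4[OF assms], simp)+

lemma lincomb4_eq_0_frame:
  assumes "(2::'a::field) = 0" and "quadric_frame (e :: nat \<Rightarrow> 'a^5) b c d" and "c \<noteq> 0"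
    and "lincomb4 e y0 y1 y2 y3 = 0"
  shows "y0 = 0 \<and> y1 = 0 \<and> y2 = 0 \<and> y3 = 0"
  using polar_lincomb4_unit[OF assms(1,2), of y0 y1 y2 y3] assms(3) unfolding assms(4) by simp

lemma quadric_frame_independent:
  assumes char2: "(2::'a::field) = 0" and F: "quadric_frame (e :: nat \<Rightarrow> 'a^5) b c d" and "c \<noteq> 0"
  shows "inj_on e {0..3}" "vec.independent (e ` {0..3})"
proof -
  have indices: "{0..3::nat} = {0, 1, 2, 3}" by auto
  have polar_e: "polar (e 0) (e 0) = 0" "polar (e 0) (e 1) = 1"
    "polar (e 1) (e 0) = 1" "polar (e 1) (e 1) = 0"
    "polar (e 2) (e 0) = 0" "polar (e 2) (e 1) = 0" "polar (e 3) (e 0) = 0" "polar (e 3) (e 1) = 0"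
    "polar (e 2) (e 2) = 0" "polar (e 2) (e 3) = c" "polar (e 3) (e 2) = c" "polar (e 3) (e 3) = 0"
    using polar_lincomb4_unit[OF char2 F, of 1 0 0 0] polar_lincomb4_unit[OF char2 F, of 0 1 0 0]
      polar_lincomb4_unit[OF char2 F, of 0 0 1 0] polar_lincomb4_unit[OF char2 F, of 0 0 0 1]
    by simp_all
  show inj: "inj_on e {0..3}"
    unfolding inj_on_def indices using polar_e \<open>c \<noteq> 0\<close>
      by (auto dest: arg_cong[of _ _ "\<lambda>x. polar x _"])
  show "vec.independent (e ` {0..3})"
    unfolding vec.independent_explicit
  proof (intro conjI allI impI)
    fix u assume "(\<Sum>v \<in> e ` {0..3}. u v *s v) = 0"
    moreover have "(\<Sum>v \<in> e ` {0..3}. u v *s v) = (\<Sum>i \<in> {0..3}. u (e i) *s e i)"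
      using sum.reindex[OF inj, of "\<lambda>v. u v *s v"] by simp
    ultimately have "lincomb4 e (u (e 0)) (u (e 1)) (u (e 2)) (u (e 3)) = 0"
      unfolding indices by (simp add: add.assoc)
    then show "\<forall>v \<in> e ` {0..3}. u v = 0"
      using lincomb4_eq_0_frame[OF char2 F \<open>c \<noteq> 0\<close>] indices by auto
  qed simp
qed

lemma ex_nontrivial_solution: "\<exists>l m. (l \<noteq> 0 \<or> m \<noteq> 0) \<and> l * u + m * v = (0::'a::field)"
proof (cases "u = 0 \<and> v = 0")
  case True
  then show ?thesis by (intro exI[of _ 1] exI[of _ 0]) simp
next
  case False
  then have "- v \<noteq> 0 \<or> u \<noteq> 0" by auto
  moreover have "- v * u + u * v = 0" by simp
  ultimately show ?thesis by blast
qed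

text \<open>If \<open>y\<^sub>0 y\<^sub>1 + g(y\<^sub>2, y\<^sub>3)\<close> vanishes on a pencil with \<open>g\<close> anisotropic, the pencil is
  degenerate: a member with \<open>y\<^sub>0 = 0\<close> and one with \<open>y\<^sub>1 = 0\<close> both have \<open>y\<^sub>2 = y\<^sub>3 = 0\<close>, and
  unless one of them is zero, their sum has \<open>y\<^sub>0 y\<^sub>1 \<noteq> 0 = g\<close>.\<close>

lemma anisotropic_singular_pencil:
  fixes u v :: "nat \<Rightarrow> 'a::field"
  assumes an: "anisotropic b c d" and w: "\<And>l m i. w l m i = l * u i + m * v i"
    and singular: "\<And>l m. w l m 0 * w l m 1 + b * w l m 2 * w l m 2 + c * w l m 2 * w l m 3
                          + d * w l m 3 * w l m 3 = 0"
  obtains l m where "l \<noteq> 0 \<or> m \<noteq> 0" "w l m 0 = 0" "w l m 1 = 0" "w l m 2 = 0" "w l m 3 = 0"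
proof -
  note degenerate = that
  have tail: "w l m 2 = 0 \<and> w l m 3 = 0" if "w l m 0 * w l m 1 = 0" for l m
  proof -
    have "b * w l m 2 * w l m 2 + c * w l m 2 * w l m 3 + d * w l m 3 * w l m 3 = 0"
      using singular[of l m] unfolding that by simp
    then show ?thesis using an unfolding anisotropic_def by blast
  qed
  obtain l m where lm: "l \<noteq> 0 \<or> m \<noteq> 0" "w l m 0 = 0"
    using ex_nontrivial_solution[of "u 0" "v 0"] unfolding w by blast
  obtain l' m' where lm': "l' \<noteq> 0 \<or> m' \<noteq> 0" "w l' m' 1 = 0"
    using ex_nontrivial_solution[of "u 1" "v 1"] unfolding w by blast
  consider "w l m 1 = 0" | "w l' m' 0 = 0" | "w l m 1 \<noteq> 0" "w l' m' 0 \<noteq> 0" by blast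
  then show ?thesis
  proof cases
    case 1
    then show ?thesis using degenerate lm tail[of l m] by simp
  next
    case 2
    then show ?thesis using degenerate lm' tail[of l' m'] by simp
  next
    case 3
    have sum: "w (l + l') (m + m') i = w l m i + w l' m' i" for i
      unfolding w by (simp add: algebra_simps)
    have "w (l + l') (m + m') 2 = 0" "w (l + l') (m + m') 3 = 0"
      unfolding sum using tail[of l m] tail[of l' m'] lm lm' by simp_all
    then have "w l' m' 0 * w l m 1 = 0"
      using singular[of "l + l'" "m + m'"] unfolding sum using lm(2) lm'(2) by simp
    with 3 show ?thesis by simp
  qed
qed

text \<open>An elliptic quadric contains no lines.\<close>

lemma elliptic_section_singular_pair:
  assumes char2: "(2::'a::field) = 0" and ell: "elliptic_section W"
    and "u \<in> W" "v \<in> W" "Qform u = 0" "Qform (v::'a^5) = 0" "polar u v = 0"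
  obtains l m where "l \<noteq> 0 \<or> m \<noteq> 0" "l *s u + m *s v = 0"
proof -
  obtain e b c d where inj: "inj_on e {0..3}" and span: "vec.span (e ` {0..3}) = W"
    and F: "quadric_frame e b c d" and an: "anisotropic b c d"
    using ell by (rule elliptic_section_frameE)
  obtain y where u: "u = lincomb4 e (y (0::nat)) (y 1) (y 2) (y 3)"
    by (rule in_span_lincomb4[OF inj]) (use assms(3) span in simp)
  obtain z where v: "v = lincomb4 e (z (0::nat)) (z 1) (z 2) (z 3)"
    by (rule in_span_lincomb4[OF inj]) (use assms(4) span in simp)
  define w where "w l m i = l * y i + m * z i" for l m i
  have pencil: "l *s u + m *s v = lincomb4 e (w l m 0) (w l m 1) (w l m 2) (w l m 3)" for l m
    unfolding u v w_def lincomb4_smult lincomb4_add ..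
  have "Qform (l *s u + m *s v) = 0" for l m
    unfolding Qform_lincomb[OF char2] assms(5-7) by simp
  then have "w l m 0 * w l m 1 + b * w l m 2 * w l m 2 + c * w l m 2 * w l m 3
      + d * w l m 3 * w l m 3 = 0" for l m
    unfolding pencil quadric_frame_Qform[OF F] .
  then obtain l m where "l \<noteq> 0 \<or> m \<noteq> 0" "w l m 0 = 0" "w l m 1 = 0" "w l m 2 = 0" "w l m 3 = 0"
    by (rule anisotropic_singular_pencil[OF an w_def])
  then show ?thesis using that[of l m] pencil[of l m] by simp
qed

lemma anisotropic_middle_ne_0:
  assumes char2: "(2::'a::field) = 0" and fin: "finite (UNIV :: 'a set)"
    and an: "anisotropic b c (d::'a)"
  shows "c \<noteq> 0"
proof
  assume c: "c = 0"
  show False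
  proof (cases "b = 0")
    case True
    then show False using an[unfolded anisotropic_def, rule_format, of 1 0] c by simp
  next
    case False
    obtain s where "s * s = d / b" using char2_square_surj[OF char2 fin] by blast
    then have "b * s * s + c * s * 1 + d * 1 * 1 = d + d" using c False by (simp add: mult.assoc)
    then show False
      using an[unfolded anisotropic_def, rule_format, of s 1] char2_add_self[OF char2, of d]
      by simp
  qed
qed

section \<open>Hyperplanes not through the nucleus\<close>

definition nucleus :: "'a::field^5" where
  "nucleus = vec5 0 0 0 0 1"

lemma polar_nucleus [simp]: "polar nucleus x = 0"
  by (simp add: polar_def nucleus_def)

lemma nucleus_ne_0 [simp]: "nucleus \<noteq> 0"
  by (simp add: nucleus_def vec5_eq_iff)

lemma nucleus_notin_elliptic_section:
  assumes char2: "(2::'a::field) = 0" and fin: "finite (UNIV :: 'a set)"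
    and ell: "elliptic_section W"
  shows "(nucleus :: 'a^5) \<notin> W"
proof
  assume "nucleus \<in> W"
  obtain e b c d where inj: "inj_on e {0..3}" and span: "vec.span (e ` {0..3}) = W"
    and F: "quadric_frame e b c d" and an: "anisotropic b c d"
    using ell by (rule elliptic_section_frameE)
  obtain y where y: "nucleus = lincomb4 e (y (0::nat)) (y 1) (y 2) (y 3)"
    using in_span_lincomb4[OF inj] \<open>nucleus \<in> W\<close> span by blast
  have "c \<noteq> 0" using anisotropic_middle_ne_0[OF char2 fin an] .
  then have "y 0 = 0 \<and> y 1 = 0 \<and> y 2 = 0 \<and> y 3 = 0"
    using polar_lincomb4_unit[OF char2 F, of "y 0" "y 1" "y 2" "y 3"] unfolding y[symmetric] by simp
  then show False using y by simp
qed

text \<open>The hyperplanes of PG(4,q) not through the nucleus are the graphs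
  \<open>x\<^sub>4 = a \<cdot> (x\<^sub>0, \<dots>, x\<^sub>3)\<close>; the last coordinate of \<open>a\<close> plays no role.\<close>

definition dot4 :: "'a::field^5 \<Rightarrow> 'a^5 \<Rightarrow> 'a" where
  "dot4 a v = a$0 * v$0 + a$1 * v$1 + a$2 * v$2 + a$3 * v$3"

definition hplane :: "'a::field^5 \<Rightarrow> ('a^5) set" where
  "hplane a = {v. v$4 = dot4 a v}"

lemma vec5_in_hplane [simp]:
  "vec5 x0 x1 x2 x3 x4 \<in> hplane a \<longleftrightarrow> x4 = a$0 * x0 + a$1 * x1 + a$2 * x2 + a$3 * x3"
  by (simp add: hplane_def dot4_def)

lemma dot4_add_left: "dot4 (a + d) v = dot4 a v + dot4 d v"
  by (simp add: dot4_def algebra_simps)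

lemma dot4_lincomb4:
  "dot4 u (lincomb4 e y0 y1 y2 y3) =
     y0 * dot4 u (e 0) + y1 * dot4 u (e 1) + y2 * dot4 u (e 2) + y3 * dot4 u (e 3)"
  by (simp add: dot4_def algebra_simps)

lemma hplane_eq:
  "a$0 = b$0 \<Longrightarrow> a$1 = b$1 \<Longrightarrow> a$2 = b$2 \<Longrightarrow> a$3 = b$3 \<Longrightarrow> hplane a = hplane b"
  unfolding hplane_def dot4_def by simp

lemma subspace_hplane: "vec.subspace (hplane a)"
  unfolding vec.subspace_def hplane_def dot4_def by (simp add: algebra_simps)

lemma hplane_smult: "v \<in> hplane a \<Longrightarrow> k *s v \<in> hplane a"
  using vec.subspace_scale[OF subspace_hplane] by blast

lemma nucleus_notin_hplane: "nucleus \<notin> hplane a"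
  by (simp add: hplane_def dot4_def nucleus_def)

lemma dim_hplane_le: "vec.dim (hplane (a::'a::field^5)) \<le> 4"
proof -
  have "vec.span (hplane a) = hplane a" using subspace_hplane by (rule vec.span_eq_iff[THEN iffD2])
  then have "vec.span (hplane a) \<subset> vec.span UNIV"
    unfolding vec.span_UNIV using nucleus_notin_hplane[of a] by blast
  then have "vec.dim (hplane a) < vec.dim (UNIV :: ('a^5) set)" by (rule vec.dim_psubset)
  then show ?thesis by (simp add: card_cart_basis)
qed

lemma subspace_eq_hplane:
  assumes subspace: "vec.subspace W" and dim: "vec.dim W = 4" and N: "(nucleus :: 'a::field^5) \<notin> W"
  obtains a where "W = hplane a"
proof -
  have spanW: "vec.span W = W" by (rule vec.span_eq_iff[THEN iffD2, OF subspace])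
  have "nucleus \<notin> vec.span W" unfolding spanW by (rule N)
  then have "vec.dim (insert nucleus W) = vec.dim (UNIV :: ('a^5) set)"
    using dim by (simp add: vec.dim_insert card_cart_basis)
  then have full: "vec.span (insert nucleus W) = UNIV"
    using vec.dim_eq_span[of "insert nucleus W" UNIV] by simp
  have decompose: "\<exists>k. x - k *s nucleus \<in> W" for x
  proof -
    have "x \<in> vec.span (insert nucleus W)" unfolding full ..
    then show ?thesis unfolding vec.span_insert spanW by simp
  qed
  obtain k0 where k0: "vec5 1 0 0 0 0 - k0 *s nucleus \<in> W" using decompose by blast
  obtain k1 where k1: "vec5 0 1 0 0 0 - k1 *s nucleus \<in> W" using decompose by blast
  obtain k2 where k2: "vec5 0 0 1 0 0 - k2 *s nucleus \<in> W" using decompose by blast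
  obtain k3 where k3: "vec5 0 0 0 1 0 - k3 *s nucleus \<in> W" using decompose by blast
  define a where "a = vec5 (- k0) (- k1) (- k2) (- k3) (0::'a)"
  define proj where "proj (v::'a^5) =
       v$0 *s (vec5 1 0 0 0 0 - k0 *s nucleus) + v$1 *s (vec5 0 1 0 0 0 - k1 *s nucleus)
       + v$2 *s (vec5 0 0 1 0 0 - k2 *s nucleus) + v$3 *s (vec5 0 0 0 1 0 - k3 *s nucleus)" for v
  have proj_in: "proj v \<in> W" for v
    unfolding proj_def using k0 k1 k2 k3
      by (intro vec.subspace_add[OF subspace] vec.subspace_scale[OF subspace])
  have proj_diff: "v - proj v = (v$4 - dot4 a v) *s nucleus" for v :: "'a^5"
    unfolding proj_def a_def nucleus_def dot4_def by (simp add: vec5_eq_iff algebra_simps)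
  have "v \<in> W \<longleftrightarrow> v \<in> hplane a" for v
  proof
    assume "v \<in> W"
    then have "(v$4 - dot4 a v) *s nucleus \<in> W"
      using vec.subspace_diff[OF subspace _ proj_in] proj_diff by metis
    moreover have "nucleus = inverse t *s (t *s nucleus)" if "t \<noteq> 0" for t :: 'a
      using that by (simp add: vector_smult_assoc)
    ultimately have "v$4 - dot4 a v = 0"
      using N vec.subspace_scale[OF subspace] by metis
    then show "v \<in> hplane a" unfolding hplane_def by simp
  next
    assume "v \<in> hplane a"
    then have "v = proj v" using proj_diff[of v] unfolding hplane_def by simp
    then show "v \<in> W" using proj_in by metis
  qed
  then show ?thesis using that by blast
qed

lemma elliptic_section_eq_hplane:
  assumes "(2::'a::field) = 0" and "finite (UNIV :: 'a set)"
    and "elliptic_section (W :: ('a^5) set)"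
  obtains a where "W = hplane a"
proof -
  have "vec.subspace W" "vec.dim W = 4" using assms(3) unfolding elliptic_section_def by blast+
  then show ?thesis using subspace_eq_hplane nucleus_notin_elliptic_section[OF assms] that by blast
qed

lemma quadric_frame_span_hplane:
  assumes char2: "(2::'a::field) = 0" and F: "quadric_frame (e :: nat \<Rightarrow> 'a^5) b 1 d"
    and in_hplane: "e 0 \<in> hplane a" "e 1 \<in> hplane a" "e 2 \<in> hplane a" "e 3 \<in> hplane a"
  shows "vec.span (e ` {0..3}) = hplane a"
proof
  have indices: "{0..3::nat} = {0, 1, 2, 3}" by auto
  then show "vec.span (e ` {0..3}) \<subseteq> hplane a"
    using in_hplane by (intro vec.span_minimal subspace_hplane) auto
  note frame = quadric_frame_independent[OF char2 F one_neq_zero]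
  have "card (e ` {0..3}) = 4" using card_image[OF frame(1)] by simp
  then show "hplane a \<subseteq> vec.span (e ` {0..3})"
    using frame(2) dim_hplane_le[of a] in_hplane indices
    by (intro vec.card_ge_dim_independent) auto
qed

definition hyp_form :: "'a::field^5 \<Rightarrow> 'a" where
  "hyp_form a = a$0 * a$1 + a$2 * a$3"

lemma hyp_form_add: "hyp_form (x + y) = hyp_form x + hyp_form y + polar x y"
  by (simp add: hyp_form_def polar_def algebra_simps)

lemma hyp_form_smult: "hyp_form (k *s y) = k * k * hyp_form y"
  by (simp add: hyp_form_def algebra_simps)

text \<open>On \<open>hplane a\<close> the quadratic form is \<open>x\<^sub>0 x\<^sub>1 + x\<^sub>2 x\<^sub>3 + (a \<cdot> x)\<^sup>2\<close>; the frames below bring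
  it to the shape \<open>y\<^sub>0 y\<^sub>1 + hyp_form a y\<^sub>2\<^sup>2 + y\<^sub>2 y\<^sub>3 + y\<^sub>3\<^sup>2\<close>, so that \<open>hyp_form a\<close> is its Arf
  invariant.\<close>

lemma hplane_quadric_frame:
  assumes char2: "(2::'a::field) = 0" and nz: "a$0 \<noteq> 0 \<or> a$1 \<noteq> 0 \<or> a$2 \<noteq> 0 \<or> (a::'a^5)$3 \<noteq> 0"
  obtains e where "quadric_frame e (hyp_form a) 1 1"
    "e 0 \<in> hplane a" "e 1 \<in> hplane a" "e 2 \<in> hplane a" "e 3 \<in> hplane a"
proof -
  note obtain_frame = that
  let ?e2 = "vec5 (a$1) (a$0) (a$3) (a$2) 0"
  have frame: thesis if "quadric_frame ((!) [e0, e1, ?e2, e3]) (hyp_form a) 1 1"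
    "e0 \<in> hplane a" "e1 \<in> hplane a" "e3 \<in> hplane a" for e0 e1 e3
    using that char2
    by (intro obtain_frame[of "(!) [e0, e1, ?e2, e3]"]) (simp_all add: hyp_form_def)
  show ?thesis
    using nz
  proof (elim disjE)
    assume "a$0 \<noteq> 0"
    then show ?thesis using char2
      by (intro frame[of "vec5 (a$2 / a$0) 0 1 0 0" "vec5 (a$3 / a$0) 0 0 1 0"
          "vec5 (1 / a$0) 0 0 0 1"])
        (simp_all add: quadric_frame_def hyp_form_def field_simps)
  next
    assume "a$1 \<noteq> 0"
    then show ?thesis using char2
      by (intro frame[of "vec5 0 (a$2 / a$1) 1 0 0" "vec5 0 (a$3 / a$1) 0 1 0"
          "vec5 0 (1 / a$1) 0 0 1"])
        (simp_all add: quadric_frame_def hyp_form_def field_simps)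
  next
    assume "a$2 \<noteq> 0"
    then show ?thesis using char2
      by (intro frame[of "vec5 1 0 (a$0 / a$2) 0 0" "vec5 0 1 (a$1 / a$2) 0 0"
          "vec5 0 0 (1 / a$2) 0 1"])
        (simp_all add: quadric_frame_def hyp_form_def field_simps)
  next
    assume "a$3 \<noteq> 0"
    then show ?thesis using char2
      by (intro frame[of "vec5 1 0 0 (a$0 / a$3) 0" "vec5 0 1 0 (a$1 / a$3) 0"
          "vec5 0 0 0 (1 / a$3) 1"])
        (simp_all add: quadric_frame_def hyp_form_def field_simps)
  qed
qed

lemma anisotropic_iff_notin_artin_schreier_range:
  assumes char2: "(2::'a::field) = 0"
  shows "anisotropic b 1 1 \<longleftrightarrow> (b::'a) \<notin> artin_schreier_range"
proof
  assume an: "anisotropic b 1 1"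
  show "b \<notin> artin_schreier_range"
  proof
    assume "b \<in> artin_schreier_range"
    then obtain t where "b = t * t + t" unfolding artin_schreier_range_def by blast
    then have "b * 1 * 1 + 1 * 1 * t + 1 * t * t = 2 * (t * t + t)"
      by (simp add: algebra_simps mult_2)
    then show False using an[unfolded anisotropic_def, rule_format, of 1 t] char2 by simp
  qed
next
  assume b: "b \<notin> artin_schreier_range"
  show "anisotropic b 1 1" unfolding anisotropic_def
  proof (intro allI impI)
    fix y2 y3 :: 'a assume zero: "b * y2 * y2 + 1 * y2 * y3 + 1 * y3 * y3 = 0"
    show "y2 = 0 \<and> y3 = 0"
    proof (cases "y2 = 0")
      case True
      then show ?thesis using zero by simp
    next
      case False
      define s where "s = y3 / y2"
      have "b * y2 * y2 + 1 * y2 * y3 + 1 * y3 * y3 = (b + (s * s + s)) * (y2 * y2)"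
        using False unfolding s_def by (simp add: field_simps)
      then have "b + (s * s + s) = 0" using zero False by simp
      then have "b = s * s + s" using char2_add_eq_0_iff[OF char2, of b "s * s + s"] by simp
      then show ?thesis using b artin_schreier_rangeI[of s] by simp
    qed
  qed
qed

lemma elliptic_section_hplane:
  assumes char2: "(2::'a::field) = 0" and a: "hyp_form (a::'a^5) \<notin> artin_schreier_range"
  shows "elliptic_section (hplane a)"
proof -
  have "a$0 \<noteq> 0 \<or> a$1 \<noteq> 0 \<or> a$2 \<noteq> 0 \<or> a$3 \<noteq> 0"
    using a zero_in_artin_schreier_range by (auto simp: hyp_form_def)
  then obtain e where F: "quadric_frame e (hyp_form a) 1 1"
    and in_hplane: "e 0 \<in> hplane a" "e 1 \<in> hplane a" "e 2 \<in> hplane a" "e 3 \<in> hplane a"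
    by (rule hplane_quadric_frame[OF char2])
  note frame = quadric_frame_independent[OF char2 F one_neq_zero]
  have span: "vec.span (e ` {0..3}) = hplane a"
    by (rule quadric_frame_span_hplane[OF char2 F in_hplane])
  have "vec.dim (hplane a) = 4"
    using vec.dim_span_eq_card_independent[OF frame(2)] card_image[OF frame(1)] span by simp
  moreover have "anisotropic (hyp_form a) 1 1"
    using a anisotropic_iff_notin_artin_schreier_range[OF char2, of "hyp_form a"] by simp
  ultimately show ?thesis
    unfolding elliptic_section_iff_frame
    by (intro conjI subspace_hplane exI[of _ e] exI[of _ "hyp_form a"] exI[of _ 1])
      (simp_all add: frame span F)
qed

text \<open>If \<open>hyp_form a = t\<^sup>2 + t\<close>, the frame vectors \<open>e 0\<close> and \<open>e 2 + t e 3\<close> span a line of the quadric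
  inside \<open>hplane a\<close>.\<close>

lemma hyp_form_notin_artin_schreier_range:
  assumes char2: "(2::'a::field) = 0" and ell: "elliptic_section (hplane (a::'a^5))"
  shows "hyp_form a \<notin> artin_schreier_range"
proof
  assume "hyp_form a \<in> artin_schreier_range"
  then obtain t where t: "hyp_form a = t * t + t" unfolding artin_schreier_range_def by blast
  show False
  proof (cases "a$0 \<noteq> 0 \<or> a$1 \<noteq> 0 \<or> a$2 \<noteq> 0 \<or> a$3 \<noteq> 0")
    case True
    then obtain e where F: "quadric_frame e (hyp_form a) 1 1"
      and in_hplane: "e 0 \<in> hplane a" "e 1 \<in> hplane a" "e 2 \<in> hplane a" "e 3 \<in> hplane a"
      by (rule hplane_quadric_frame[OF char2])
    let ?v = "lincomb4 e 0 0 1 t"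
    have v: "?v \<in> hplane a"
      using lincomb4_in_span quadric_frame_span_hplane[OF char2 F in_hplane] by blast
    have "Qform ?v = 2 * (t * t + t)"
      unfolding quadric_frame_Qform[OF F] t by (simp add: algebra_simps mult_2)
    then have Qv: "Qform ?v = 0" using char2 by simp
    have Q0: "Qform (e 0) = 0" using quadric_frame_Qform[OF F, of 1 0 0 0] by simp
    have polar0: "polar (e 0) ?v = 0" using polar_lincomb4[OF char2 F, of 1 0 0 0 0 0 1 t] by simp
    obtain l m where lm: "l \<noteq> 0 \<or> m \<noteq> 0" "l *s e 0 + m *s ?v = 0"
      by (rule elliptic_section_singular_pair[OF char2 ell in_hplane(1) v Q0 Qv polar0])
    have combo: "l *s e 0 + m *s ?v = lincomb4 e l 0 m (m * t)"
      by (simp add: vec_eq_iff algebra_simps)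
    have "lincomb4 e l 0 m (m * t) = 0" unfolding combo[symmetric] by (rule lm(2))
    then have "l = 0 \<and> m = 0" using lincomb4_eq_0_frame[OF char2 F one_neq_zero] by blast
    then show False using lm(1) by simp
  next
    case False
    then have "vec5 1 0 0 0 0 \<in> hplane a" "vec5 0 0 1 0 0 \<in> hplane a" by simp_all
    then obtain l m where "l \<noteq> 0 \<or> m \<noteq> 0" "l *s vec5 1 0 0 0 0 + m *s vec5 0 0 1 0 0 = (0::'a^5)"
      by (rule elliptic_section_singular_pair[OF char2 ell]) simp_all
    then show False by (simp add: vec5_eq_iff)
  qed
qed

lemma elliptic_ovoid_iff:
  assumes "(2::'a::field) = 0" and "finite (UNIV :: 'a set)"
  shows "elliptic_ovoid (X :: ('a^5) set set) \<longleftrightarrow>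
    (\<exists>a. hyp_form a \<notin> artin_schreier_range \<and> X = section_points (hplane a))"
  unfolding elliptic_ovoid_def
proof
  assume "\<exists>W. elliptic_section W \<and> X = section_points W"
  then obtain W where W: "elliptic_section W" "X = section_points W" by blast
  obtain a where "W = hplane a" by (rule elliptic_section_eq_hplane[OF assms W(1)])
  then show "\<exists>a. hyp_form a \<notin> artin_schreier_range \<and> X = section_points (hplane a)"
    using W hyp_form_notin_artin_schreier_range[OF assms(1)] by blast
next
  assume "\<exists>a. hyp_form a \<notin> artin_schreier_range \<and> X = section_points (hplane a)"
  then show "\<exists>W. elliptic_section W \<and> X = section_points W"
    using elliptic_section_hplane[OF assms(1)] by blast
qed

lemma elliptic_ovoid_hplane:
  "(2::'a::field) = 0 \<Longrightarrow> hyp_form (a::'a^5) \<notin> artin_schreier_range \<Longrightarrow>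
    elliptic_ovoid (section_points (hplane a))"
  unfolding elliptic_ovoid_def using elliptic_section_hplane by blast

lemma elliptic_ovoid_card_ne_1:
  assumes "elliptic_ovoid X"
  shows "card X \<noteq> 1"
proof -
  obtain W where ell: "elliptic_section W" and X: "X = section_points W"
    using assms unfolding elliptic_ovoid_def by blast
  obtain e b c d where "vec.span (e ` {0..3}) = W" and F: "quadric_frame e b c d"
    using ell by (rule elliptic_section_frameE)
  then have in_W: "e 0 \<in> W" "e 1 \<in> W" by (auto intro: vec.span_base)
  have Q: "Qform (e 0) = 0" "Qform (e 1) = 0" "Qform (e 0 + e 1) = 1"
    using quadric_frame_Qform[OF F, of 1 0 0 0] quadric_frame_Qform[OF F, of 0 1 0 0]
      quadric_frame_Qform[OF F, of 1 1 0 0] by simp_all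
  then have "e 0 \<noteq> 0" "e 1 \<noteq> 0" by auto
  then have points: "proj_pt (e 0) \<in> X" "proj_pt (e 1) \<in> X"
    unfolding X using in_W Q by (simp_all add: proj_pt_in_section_points)
  have "proj_pt (e 0) \<noteq> proj_pt (e 1)"
  proof
    assume "proj_pt (e 0) = proj_pt (e 1)"
    then obtain k where "e 0 = k *s e 1" using proj_pt_eqD by blast
    then have "e 0 + e 1 = (k + 1) *s e 1" by (simp add: vec_eq_iff algebra_simps)
    then show False using Q Qform_smult[of "k + 1" "e 1"] by simp
  qed
  show ?thesis
  proof
    assume "card X = 1"
    then obtain x where "X = {x}" by (rule card_1_singletonE)
    then show False using points \<open>proj_pt (e 0) \<noteq> proj_pt (e 1)\<close> by simp
  qed
qed

section \<open>Tangent ovoids\<close>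

text \<open>The hyperplanes \<open>hplane a\<close> and \<open>hplane (a + d)\<close> meet in the plane \<open>d \<cdot> x = 0\<close> of
  \<open>hplane a\<close>, which under the tangency condition is the tangent plane of the quadric at the point
  \<open>P\<close> below; as an elliptic quadric contains no lines, the two ovoids share only \<open>P\<close>.\<close>

lemma section_points_hplane_tangent:
  assumes char2: "(2::'a::field) = 0" and ell: "elliptic_section (hplane a)"
    and d: "d$0 \<noteq> 0 \<or> d$1 \<noteq> 0 \<or> d$2 \<noteq> 0 \<or> (d::'a^5)$3 \<noteq> 0"
    and tangent: "hyp_form d = polar a d * polar a d"
  shows "section_points (hplane a) \<inter> section_points (hplane (a + d))
           = {proj_pt (vec5 (d$1) (d$0) (d$3) (d$2) (polar a d))}"
proof -
  define P where "P = vec5 (d$1) (d$0) (d$3) (d$2) (polar a d)"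
  have P_a: "P \<in> hplane a" unfolding P_def by (simp add: polar_def algebra_simps)
  have P_d: "dot4 d P = 0" unfolding P_def using char2
    by (simp add: dot4_def algebra_simps flip: mult_2)
  have P_ad: "P \<in> hplane (a + d)" using P_a P_d by (simp add: hplane_def dot4_add_left)
  have "Qform P = hyp_form d + polar a d * polar a d" unfolding P_def
    by (simp add: hyp_form_def algebra_simps)
  then have QP: "Qform P = 0" using tangent char2 by (simp flip: mult_2)
  have P0: "P \<noteq> 0" using d unfolding P_def by (auto simp: vec5_eq_iff)
  have "X \<in> {proj_pt P}"
    if X: "X \<in> section_points (hplane a) \<inter> section_points (hplane (a + d))" for X
  proof -
    obtain v where v: "X = proj_pt v" "v \<in> hplane a" "v \<noteq> 0" "Qform v = 0"
      using X unfolding section_points_def by blast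
    obtain w where w: "X = proj_pt w" "w \<in> hplane (a + d)"
      using X unfolding section_points_def by blast
    obtain k where "v = k *s w" using proj_pt_eqD v(1) w(1) by metis
    then have "v \<in> hplane (a + d)" using w(2) hplane_smult by simp
    then have "dot4 d v = 0" using v(2) by (simp add: hplane_def dot4_add_left)
    then have "polar v P = 0" unfolding P_def by (simp add: polar_def dot4_def algebra_simps)
    then obtain l m where lm: "l \<noteq> 0 \<or> m \<noteq> 0" "l *s v + m *s P = 0"
      by (rule elliptic_section_singular_pair[OF char2 ell v(2) P_a v(4) QP])
    have "l \<noteq> 0" using lm P0 by (auto simp: vec_eq_iff)
    moreover have "m \<noteq> 0" using lm v(3) by (auto simp: vec_eq_iff)
    moreover have v_P: "v = (- m / l) *s P"
    proof -
      have "l *s v = - (m *s P)" using lm(2) by (simp add: eq_neg_iff_add_eq_0)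
      then show ?thesis using \<open>l \<noteq> 0\<close> by (simp add: vec_eq_iff field_simps)
    qed
    ultimately have "proj_pt v = proj_pt P" unfolding v_P by (intro proj_pt_smult) simp
    then show ?thesis using v(1) by simp
  qed
  moreover have "proj_pt P \<in> section_points (hplane a) \<inter> section_points (hplane (a + d))"
    unfolding section_points_def using P_a P_ad P0 QP by blast
  ultimately show ?thesis unfolding P_def by blast
qed

text \<open>An elliptic ovoid spans its hyperplane.\<close>

lemma elliptic_section_point_off_hyperplane:
  assumes char2: "(2::'a::field) = 0" and ell: "elliptic_section (hplane a)"
    and u: "u$0 \<noteq> 0 \<or> u$1 \<noteq> 0 \<or> u$2 \<noteq> 0 \<or> (u::'a^5)$3 \<noteq> 0"
  obtains z where "z \<in> hplane a" "Qform z = 0" "dot4 u z \<noteq> 0"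
proof -
  have "\<exists>z \<in> hplane a. Qform z = 0 \<and> dot4 u z \<noteq> 0"
  proof (rule ccontr)
    assume "\<not> ?thesis"
    then have off: "dot4 u z = 0" if "z \<in> hplane a" "Qform z = 0" for z
      using that by blast
    obtain e b c d where inj: "inj_on e {0..3}" and span: "vec.span (e ` {0..3}) = hplane a"
      and F: "quadric_frame e b c d"
      using ell by (rule elliptic_section_frameE)
    have off_frame: "dot4 u (lincomb4 e y0 y1 y2 y3) = 0"
      if "y0 * y1 + b * y2 * y2 + c * y2 * y3 + d * y3 * y3 = 0" for y0 y1 y2 y3
    proof (rule off)
      show "lincomb4 e y0 y1 y2 y3 \<in> hplane a" unfolding span[symmetric] by (rule lincomb4_in_span)
      show "Qform (lincomb4 e y0 y1 y2 y3) = 0" unfolding quadric_frame_Qform[OF F] by (rule that)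
    qed
    have "dot4 u (e 0) = 0" "dot4 u (e 1) = 0"
      using off_frame[of 1 0 0 0, unfolded dot4_lincomb4]
        off_frame[of 0 1 0 0, unfolded dot4_lincomb4]
      by simp_all
    moreover have "dot4 u (e 2) = 0" "dot4 u (e 3) = 0"
      using off_frame[of "- b" 1 1 0, unfolded dot4_lincomb4]
        off_frame[of "- d" 1 0 1, unfolded dot4_lincomb4] calculation
      by simp_all
    ultimately have "dot4 u v = 0" if "v \<in> hplane a" for v
      using in_span_lincomb4[OF inj] that span by (metis dot4_lincomb4 mult_zero_right add_0)
    from this[of "vec5 1 0 0 0 (a$0)"] this[of "vec5 0 1 0 0 (a$1)"]
      this[of "vec5 0 0 1 0 (a$2)"] this[of "vec5 0 0 0 1 (a$3)"]
    show False using u by (simp add: dot4_def)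
  qed
  then show ?thesis using that by blast
qed

text \<open>Given distinct elliptic ovoids \<open>X\<^sub>a, X\<^sub>b\<close>, take \<open>c = a + d\<close> with \<open>d\<close> a multiple of the
  coordinate swap \<open>y\<close> of a point \<open>z\<close> of \<open>X\<^sub>a\<close>: this makes \<open>X\<^sub>c\<close> tangent to \<open>X\<^sub>a\<close> at \<open>z\<close>, and the
  scaling \<open>\<mu>\<close> is a root of the Artin-Schreier equation that makes \<open>X\<^sub>c\<close> tangent to \<open>X\<^sub>b\<close> as well.
  The equation is solvable because \<open>hyp_form a\<close> and \<open>hyp_form b\<close> lie in the same coset of the
  Artin-Schreier range.\<close>

lemma hplane_common_tangent:
  assumes char2: "(2::'a::field) = 0" and fin: "finite (UNIV :: 'a set)"
    and a: "hyp_form (a::'a^5) \<notin> artin_schreier_range" and b: "hyp_form b \<notin> artin_schreier_range"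
    and ab: "(a + b)$0 \<noteq> 0 \<or> (a + b)$1 \<noteq> 0 \<or> (a + b)$2 \<noteq> 0 \<or> (a + b)$3 \<noteq> 0"
  obtains c where "hyp_form c \<notin> artin_schreier_range"
    "card (section_points (hplane a) \<inter> section_points (hplane c)) = 1"
    "card (section_points (hplane b) \<inter> section_points (hplane c)) = 1"
proof -
  have ell_a: "elliptic_section (hplane a)" by (rule elliptic_section_hplane[OF char2 a])
  have ell_b: "elliptic_section (hplane b)" by (rule elliptic_section_hplane[OF char2 b])
  define u where "u = a + b"
  obtain z where z: "z \<in> hplane a" "Qform z = 0" "dot4 u z \<noteq> 0"
    by (rule elliptic_section_point_off_hyperplane[OF char2 ell_a ab[folded u_def]])
  define y where "y = vec5 (z$1) (z$0) (z$3) (z$2) (0::'a)"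
  have polar_a_y: "polar a y = z$4"
    using z(1) unfolding y_def by (simp add: hplane_def dot4_def polar_def algebra_simps)
  have "hyp_form y = - (z$4 * z$4)"
    using z(2) unfolding y_def
      by (simp add: Qform_def hyp_form_def algebra_simps eq_neg_iff_add_eq_0)
  then have hyp_y: "hyp_form y = polar a y * polar a y"
    using polar_a_y char2_minus[OF char2] by simp
  have polar_u_y: "polar u y = dot4 u z" unfolding y_def
    by (simp add: polar_def dot4_def algebra_simps)
  define \<beta> where "\<beta> = polar a b"
  have hyp_u: "hyp_form u = hyp_form a + hyp_form b + \<beta>" unfolding u_def \<beta>_def
    by (rule hyp_form_add)
  have "hyp_form u + \<beta> * \<beta> = (hyp_form a + hyp_form b) + (\<beta> * \<beta> + \<beta>)"
    unfolding hyp_u by (simp add: algebra_simps)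
  also have "\<dots> \<in> artin_schreier_range"
    using artin_schreier_range_add[OF char2 artin_schreier_range_add_notin[OF char2 fin a b]
        artin_schreier_rangeI] .
  finally obtain \<mu> where \<mu>: "\<mu> \<noteq> 0" "\<mu> * \<mu> + \<mu> = hyp_form u + \<beta> * \<beta>"
    by (rule artin_schreier_root_ne_0[OF char2])
  define d where "d = (\<mu> / polar u y) *s y"
  define r where "r = polar a d"
  have hyp_d: "hyp_form d = r * r"
    unfolding r_def d_def hyp_form_smult polar_smult_right hyp_y by (simp add: algebra_simps)
  have polar_u_d: "polar u d = \<mu>" unfolding d_def polar_smult_right using z(3) polar_u_y by simp
  have nonzero: "x$0 \<noteq> 0 \<or> x$1 \<noteq> 0 \<or> x$2 \<noteq> 0 \<or> x$3 \<noteq> 0" if "polar u x \<noteq> 0" for x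
    using that by (auto simp: polar_def)
  define c where "c = a + d"
  have tangent_a: "card (section_points (hplane a) \<inter> section_points (hplane c)) = 1"
    unfolding c_def
    by (subst section_points_hplane_tangent[OF char2 ell_a nonzero])
      (simp_all add: polar_u_d \<mu> hyp_d r_def)
  define e where "e = u + d"
  have c_e: "c = b + e"
    unfolding c_def e_def u_def using char2 by (simp add: vec_eq_iff algebra_simps flip: mult_2)
  have polar_u_e: "polar u e = \<mu>"
    unfolding e_def polar_add_right polar_self[OF char2] polar_u_d by simp
  have polar_b_e: "polar b e = \<beta> + (\<mu> - r)"
  proof -
    have "polar b u = \<beta>" unfolding u_def \<beta>_def polar_add_right polar_self[OF char2]
      by (simp add: polar_commute)
    moreover have "polar b d = \<mu> - r" using polar_u_d unfolding u_def r_def polar_add_left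
      by (simp add: eq_diff_eq add.commute)
    ultimately show ?thesis unfolding e_def polar_add_right by simp
  qed
  have "hyp_form e - polar b e * polar b e = 2 * (\<mu> - \<beta> * \<beta> - \<beta> * \<mu> + \<beta> * r + \<mu> * r)"
  proof -
    have "hyp_form u = \<mu> * \<mu> + \<mu> - \<beta> * \<beta>" using \<mu>(2) by (simp add: algebra_simps)
    then show ?thesis
      unfolding e_def hyp_form_add hyp_d polar_u_d polar_b_e[unfolded e_def]
        by (simp add: algebra_simps mult_2)
  qed
  then have hyp_e: "hyp_form e = polar b e * polar b e" using char2 by simp
  have tangent_b: "card (section_points (hplane b) \<inter> section_points (hplane c)) = 1"
    unfolding c_e
    by (subst section_points_hplane_tangent[OF char2 ell_b nonzero hyp_e])
      (simp_all add: polar_u_e \<mu>)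
  have "hyp_form c \<notin> artin_schreier_range"
  proof
    assume "hyp_form c \<in> artin_schreier_range"
    then have "hyp_form c + (r * r + r) \<in> artin_schreier_range"
      using artin_schreier_range_add[OF char2 _ artin_schreier_rangeI] by blast
    moreover have "hyp_form c + (r * r + r) = hyp_form a + 2 * (r * r + r)"
      unfolding c_def hyp_form_add hyp_d r_def[symmetric] by (simp add: algebra_simps mult_2)
    ultimately show False using a char2 by simp
  qed
  then show ?thesis using that tangent_a tangent_b by blast
qed

section \<open>The graph \<open>\<Gamma>\<close>\<close>

lemma graph_dist_le_walk:
  "is_walk V E p \<Longrightarrow> hd p = x \<Longrightarrow> last p = y \<Longrightarrow> graph_dist V E x y \<le> enat (length p - 1)"
  unfolding graph_dist_def by (intro INF_lower) simp

lemma graph_dist_self: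
  assumes "x \<in> V" shows "graph_dist V E x x = 0"
proof -
  have "graph_dist V E x x \<le> enat 0"
    using graph_dist_le_walk[of V E "[x]" x x] assms by (simp add: is_walk_def)
  then show ?thesis by (simp add: zero_enat_def[symmetric])
qed

lemma graph_dist_le_2:
  assumes "x \<in> V" "y \<in> V" "z \<in> V" "E x z" "E z y"
  shows "graph_dist V E x y \<le> 2"
proof -
  have "is_walk V E [x, z, y]"
    unfolding is_walk_def using assms by (auto simp: less_Suc_eq nth_Cons')
  then show ?thesis using graph_dist_le_walk[of V E "[x, z, y]" x y]
    by (simp add: numeral_eq_enat eval_nat_numeral)
qed

lemma graph_dist_ge_2:
  assumes "x \<noteq> y" "\<not> E x y"
  shows "2 \<le> graph_dist V E x y"
  unfolding graph_dist_def
proof (rule INF_greatest)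
  fix p assume "p \<in> {p. is_walk V E p \<and> hd p = x \<and> last p = y}"
  then have walk: "is_walk V E p" "hd p = x" "last p = y" by auto
  have "length p \<noteq> 0" using walk(1) unfolding is_walk_def by simp
  moreover have "length p \<noteq> 1" using walk assms(1) by (auto simp: length_Suc_conv)
  moreover have "length p \<noteq> 2"
  proof
    assume "length p = 2"
    then obtain z1 z2 where "p = [z1, z2]" by (auto simp: length_Suc_conv numeral_2_eq_2)
    then show False using walk assms(2) unfolding is_walk_def by auto
  qed
  ultimately have "3 \<le> length p" by linarith
  then show "2 \<le> enat (length p - 1)" by (simp add: numeral_eq_enat)
qed

lemma graph_diameter_eq_2:
  assumes le: "\<And>x y. x \<in> V \<Longrightarrow> y \<in> V \<Longrightarrow> graph_dist V E x y \<le> 2"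
    and "x \<in> V" "y \<in> V" "x \<noteq> y" "\<not> E x y"
  shows "graph_diameter V E = 2"
proof (rule antisym)
  show "graph_diameter V E \<le> 2" unfolding graph_diameter_def by (intro SUP_least le)
  have "2 \<le> graph_dist V E x y" using assms(4,5) by (rule graph_dist_ge_2)
  also have "\<dots> \<le> graph_diameter V E"
    unfolding graph_diameter_def using assms(2,3) by (intro SUP_upper2[of x] SUP_upper)
  finally show "2 \<le> graph_diameter V E" .
qed

lemma elliptic_ovoids_common_neighbour:
  assumes char2: "(2::'a::field) = 0" and fin: "finite (UNIV :: 'a set)"
    and X: "elliptic_ovoid (X :: ('a^5) set set)" and Y: "elliptic_ovoid Y" and "X \<noteq> Y"
  obtains Z where "elliptic_ovoid Z" "Gamma_adj X Z" "Gamma_adj Z Y"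
proof -
  obtain a where a: "hyp_form a \<notin> artin_schreier_range" "X = section_points (hplane a)"
    using X unfolding elliptic_ovoid_iff[OF char2 fin] by blast
  obtain b where b: "hyp_form b \<notin> artin_schreier_range" "Y = section_points (hplane b)"
    using Y unfolding elliptic_ovoid_iff[OF char2 fin] by blast
  have "(a + b)$0 \<noteq> 0 \<or> (a + b)$1 \<noteq> 0 \<or> (a + b)$2 \<noteq> 0 \<or> (a + b)$3 \<noteq> 0"
  proof (rule ccontr)
    assume "\<not> ?thesis"
    then have "hplane a = hplane b" using char2_add_eq_0_iff[OF char2] by (intro hplane_eq) auto
    then show False using \<open>X \<noteq> Y\<close> a b by simp
  qed
  then obtain c where c: "hyp_form c \<notin> artin_schreier_range"
    "card (X \<inter> section_points (hplane c)) = 1" "card (Y \<inter> section_points (hplane c)) = 1"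
    unfolding a(2) b(2) by (rule hplane_common_tangent[OF char2 fin a(1) b(1)])
  define Z where "Z = section_points (hplane c)"
  have Z: "elliptic_ovoid Z" unfolding Z_def by (rule elliptic_ovoid_hplane[OF char2 c(1)])
  have "X \<noteq> Z" "Z \<noteq> Y" using c(2,3) elliptic_ovoid_card_ne_1[OF X] elliptic_ovoid_card_ne_1[OF Y]
    unfolding Z_def[symmetric] by auto
  then show ?thesis using that X Y Z c(2,3) unfolding Gamma_adj_def Z_def[symmetric]
    by (simp add: Int_commute)
qed

lemma elliptic_ovoids_dist_le_2:
  assumes "(2::'a::field) = 0" and "finite (UNIV :: 'a set)"
    and "elliptic_ovoid (X :: ('a^5) set set)" "elliptic_ovoid Y"
  shows "graph_dist {X. elliptic_ovoid X} Gamma_adj X Y \<le> 2"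
proof (cases "X = Y")
  case True
  then show ?thesis using assms(3) by (simp add: graph_dist_self)
next
  case False
  then obtain Z where "elliptic_ovoid Z" "Gamma_adj X Z" "Gamma_adj Z Y"
    using elliptic_ovoids_common_neighbour[OF assms] by blast
  then show ?thesis using assms(3,4) by (intro graph_dist_le_2) simp_all
qed

lemma ex_nonadjacent_elliptic_ovoids:
  assumes char2: "(2::'a::field) = 0" and fin: "finite (UNIV :: 'a set)" and "2 < CARD('a)"
  obtains X Y
  where "elliptic_ovoid (X :: ('a^5) set set)" "elliptic_ovoid Y" "X \<noteq> Y" "\<not> Gamma_adj X Y"
proof -
  have "\<not> UNIV \<subseteq> {0, 1::'a}"
  proof
    assume "UNIV \<subseteq> {0, 1::'a}"
    then have "CARD('a) \<le> card {0, 1::'a}" by (intro card_mono) auto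
    then show False using \<open>2 < CARD('a)\<close> by simp
  qed
  then obtain t :: 'a where t: "t \<noteq> 0" "t \<noteq> 1" by blast
  obtain \<alpha> :: 'a where \<alpha>: "\<alpha> \<notin> artin_schreier_range"
    using artin_schreier_range_ne_UNIV[OF char2 fin] by blast
  define X where "X = section_points (hplane (vec5 \<alpha> 1 0 0 0))"
  define Y where "Y = section_points (hplane (vec5 (\<alpha> * t) (1 / t) 0 0 0))"
  have "elliptic_ovoid X" "elliptic_ovoid Y"
    unfolding X_def Y_def using \<alpha> t by (simp_all add: elliptic_ovoid_hplane[OF char2] hyp_form_def)
  have "proj_pt (vec5 0 0 1 0 0) \<in> X \<inter> Y" "proj_pt (vec5 0 0 0 1 0) \<in> X \<inter> Y"
    unfolding X_def Y_def by (auto intro!: proj_pt_in_section_points simp: vec5_eq_iff)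
  moreover have "proj_pt (vec5 0 0 1 0 0) \<noteq> proj_pt (vec5 0 0 0 1 (0::'a))"
  proof
    assume "proj_pt (vec5 0 0 1 0 0) = proj_pt (vec5 0 0 0 1 (0::'a))"
    then obtain k where "vec5 0 0 1 0 0 = k *s vec5 0 0 0 1 (0::'a)" using proj_pt_eqD by blast
    then show False by (simp add: vec5_eq_iff)
  qed
  ultimately have "card (X \<inter> Y) \<noteq> 1" by (metis card_1_singletonE singletonD)
  have "proj_pt (vec5 0 1 1 1 1) \<in> X"
    unfolding X_def using char2 by (intro proj_pt_in_section_points) (simp_all add: vec5_eq_iff)
  moreover have "proj_pt (vec5 0 1 1 1 (1::'a)) \<notin> Y"
  proof
    assume "proj_pt (vec5 0 1 1 1 1) \<in> Y"
    then obtain w where w: "proj_pt (vec5 0 1 1 1 1) = proj_pt w"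
        "w \<in> hplane (vec5 (\<alpha> * t) (1 / t) 0 0 0)"
      unfolding Y_def section_points_def by blast
    obtain k where "vec5 0 1 1 1 1 = k *s w" using proj_pt_eqD[OF w(1)] by blast
    then have "vec5 0 1 1 1 (1::'a) \<in> hplane (vec5 (\<alpha> * t) (1 / t) 0 0 0)"
      using hplane_smult[OF w(2)] by simp
    then show False using t by (simp add: field_simps)
  qed
  ultimately have "X \<noteq> Y" by blast
  then show ?thesis using that \<open>elliptic_ovoid X\<close> \<open>elliptic_ovoid Y\<close> \<open>card (X \<inter> Y) \<noteq> 1\<close>
    unfolding Gamma_adj_def by blast
qed

theorem mainTheorem3:
  fixes n :: nat
  assumes "CARD('a::field) = 2 ^ n"
    and "(2::nat) ^ n > 2"
  shows "graph_diameter {X :: ('a ^ 5) set set. elliptic_ovoid X} Gamma_adj = 2"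
proof -
  have char2: "(2::'a) = 0" by (rule two_eq_zero_if_card_power_of_two[OF assms(1)])
  have fin: "finite (UNIV :: 'a set)" by (rule card_ge_0_finite) (simp add: assms(1))
  have "2 < CARD('a)" using assms by simp
  then obtain X Y :: "('a^5) set set"
    where "elliptic_ovoid X" "elliptic_ovoid Y" "X \<noteq> Y" "\<not> Gamma_adj X Y"
    by (rule ex_nonadjacent_elliptic_ovoids[OF char2 fin])
  then show ?thesis by (intro graph_diameter_eq_2 elliptic_ovoids_dist_le_2[OF char2 fin]) simp_all
qed

end
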